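(* Let $F$ be a graph of diameter $2$, $n=|V(F)|$, $t=\delta(F)$, and let $l>n$ be an integer. Suppose that either $t=1$, or $t\ge2$ and $C_{l-2}^{n-2}>n!\,C_{l-1}^{n-t-1}$. Then $0<f_{2l}<z_{i+1}-z_i$ for every $i\in\{1,2,\dots,t\}$.
   Context: All graphs are simple, finite, undirected. The $F$-degree of a vertex $v$ in $G$ is the number of subgraphs of $G$ (not necessarily induced) isomorphic to $F$ and containing $v$. $A_{2l-1}$ is the graph with vertex set $\{1,\dots,2l-1\}$ in which distinct $i,j$ are adjacent iff $|i-j|\le l-1$; $F_{2l}$ is obtained from $A_{2l-1}$ by adding a new vertex $2l$ joined exactly to $1,\dots,t$. $z_i$ is the $F$-degree of $i$ in $A_{2l-1}$ and $f_{2l}$ the $F$-degree of vertex $2l$ in $F_{2l}$. $C_m^k=\frac{m!}{k!(m-k)!}$ for integers $m\ge k\ge 0$, and $C_m^k=0$ otherwise. *)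

theory Defs
  imports Main
begin

type_synonym 'a graph = "'a set \<times> 'a set set"

definition is_graph :: "'a graph \<Rightarrow> bool" where
  "is_graph G \<longleftrightarrow> finite (fst G) \<and>
     (\<forall>e\<in>snd G. \<exists>u v. u \<noteq> v \<and> e = {u, v} \<and> u \<in> fst G \<and> v \<in> fst G)"

definition degree :: "'a graph \<Rightarrow> 'a \<Rightarrow> nat" where
  "degree G v = card {u \<in> fst G. {u, v} \<in> snd G}"

definition min_degree :: "'a graph \<Rightarrow> nat" where
  "min_degree G = Min (degree G ` fst G)"

definition is_walk :: "'a graph \<Rightarrow> 'a list \<Rightarrow> bool" where
  "is_walk G xs \<longleftrightarrow> xs \<noteq> [] \<and> set xs \<subseteq> fst G \<and>
     (\<forall>i. Suc i < length xs \<longrightarrow> {xs ! i, xs ! Suc i} \<in> snd G)"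

definition connected_graph :: "'a graph \<Rightarrow> bool" where
  "connected_graph G \<longleftrightarrow> fst G \<noteq> {} \<and>
     (\<forall>u\<in>fst G. \<forall>v\<in>fst G. \<exists>xs. is_walk G xs \<and> hd xs = u \<and> last xs = v)"

definition gdist :: "'a graph \<Rightarrow> 'a \<Rightarrow> 'a \<Rightarrow> nat" where
  "gdist G u v = (LEAST k. \<exists>xs. is_walk G xs \<and> hd xs = u \<and> last xs = v \<and> length xs = Suc k)"

definition diameter :: "'a graph \<Rightarrow> nat" where
  "diameter G = Max {gdist G u v | u v. u \<in> fst G \<and> v \<in> fst G}"

definition subgraph :: "'a graph \<Rightarrow> 'a graph \<Rightarrow> bool" where
  "subgraph H G \<longleftrightarrow> is_graph H \<and> fst H \<subseteq> fst G \<and> snd H \<subseteq> snd G"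

definition isomorphic :: "'b graph \<Rightarrow> 'a graph \<Rightarrow> bool" where
  "isomorphic F H \<longleftrightarrow> (\<exists>f. bij_betw f (fst F) (fst H) \<and>
     (\<forall>u\<in>fst F. \<forall>v\<in>fst F. {u, v} \<in> snd F \<longleftrightarrow> {f u, f v} \<in> snd H))"

definition F_degree :: "'b graph \<Rightarrow> 'a graph \<Rightarrow> 'a \<Rightarrow> nat" where
  "F_degree F G v = card {H. subgraph H G \<and> isomorphic F H \<and> v \<in> fst H}"

definition A_graph :: "nat \<Rightarrow> nat graph" where
  "A_graph l = ({1..2*l-1},
     {{i, j} | i j. i \<in> {1..2*l-1} \<and> j \<in> {1..2*l-1} \<and> i < j \<and> j - i \<le> l - 1})"

definition F_graph :: "nat \<Rightarrow> nat \<Rightarrow> nat graph" where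
  "F_graph l t = (insert (2*l) (fst (A_graph l)),
     snd (A_graph l) \<union> {{j, 2*l} | j. j \<in> {1..t}})"

end

theory Submission
  imports Defs "HOL-Combinatorics.Permutations"
begin

text \<open>
  Write z_v for the number of copies of F in A_(2l-1) through v, n for the order and t for the
  minimum degree of F. Transposing i and i+1 maps the copies through i that avoid i+1 injectively
  to copies through i+1 that avoid i, and no image uses the long edge {i+1, i+l}, because
  {i, i+l} is not an edge. So z_(i+1) - z_i is at least the number of copies through i+1 that
  avoid i and use that edge; putting an edge of F on it and the other n-2 vertices anywhere in
  the clique {i+2, ..., i+l-1} gives at least C(l-2, n-2) of them.

  In a copy of F through the apex 2l of F_2l, the apex has degree at least t, so its neighbours
  are exactly 1, ..., t, and as F has diameter 2 all other vertices lie in {1, ..., t+l-1}.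
  Hence there are at most n! C(l-1, n-t-1) such copies, and at least one: send a vertex of
  minimum degree to 2l. For t = 1 the binomial bound is replaced by an injection: folding the
  apex onto 2 turns each copy through 2l into a copy using the long edge {2, l+1}, and a copy
  of that kind containing the edge {2, 3}, built on an induced path of length two, is missed.
\<close>

section \<open>Images of graphs and copies\<close>

definition map_graph :: "('b \<Rightarrow> 'a) \<Rightarrow> 'b graph \<Rightarrow> 'a graph" where
  "map_graph g H = (g ` fst H, (`) g ` snd H)"

definition copies :: "'b graph \<Rightarrow> 'a graph \<Rightarrow> 'a graph set" where
  "copies F G = {H. subgraph H G \<and> isomorphic F H}"

lemma F_degree_eq_card_copies: "F_degree F G v = card {H \<in> copies F G. v \<in> fst H}"
  unfolding F_degree_def copies_def by simp

lemma is_graph_edgeE: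
  assumes "is_graph G" "e \<in> snd G"
  obtains u v where "u \<noteq> v" "e = {u, v}" "u \<in> fst G" "v \<in> fst G"
  using assms unfolding is_graph_def by blast

lemma is_graph_edgeD:
  assumes "is_graph G" "{u, v} \<in> snd G"
  shows "u \<in> fst G" "v \<in> fst G" "u \<noteq> v"
  using assms by (auto elim!: is_graph_edgeE simp: doubleton_eq_iff)

lemma finite_copies:
  assumes "finite (fst G)" "finite (snd G)"
  shows "finite (copies F G)"
proof (rule finite_subset)
  show "copies F G \<subseteq> Pow (fst G) \<times> Pow (snd G)"
    unfolding copies_def subgraph_def by auto
qed (use assms in simp)

lemma map_graph_comp: "map_graph f (map_graph g H) = map_graph (f \<circ> g) H"
  unfolding map_graph_def by (simp add: image_comp)

lemma map_graph_cong:
  assumes "is_graph H" "\<And>x. x \<in> fst H \<Longrightarrow> f x = g x"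
  shows "map_graph f H = map_graph g H"
proof -
  have "f ` e = g ` e" if "e \<in> snd H" for e
    using assms(1) that by (rule is_graph_edgeE) (auto simp: assms(2))
  then show ?thesis
    unfolding map_graph_def using assms(2) by (auto intro!: image_cong)
qed

lemma map_graph_id: "map_graph id H = H"
  unfolding map_graph_def by simp

lemma map_graph_edge: "{u, v} \<in> snd H \<Longrightarrow> {g u, g v} \<in> snd (map_graph g H)"
  unfolding map_graph_def by (auto intro!: image_eqI[of _ _ "{u, v}"])

lemma map_graph_edgeE:
  assumes "is_graph H" "e \<in> snd (map_graph g H)"
  obtains u v where "{u, v} \<in> snd H" "u \<in> fst H" "v \<in> fst H" "u \<noteq> v" "e = {g u, g v}"
  using assms unfolding map_graph_def by (auto elim!: is_graph_edgeE)

lemma map_graph_edge_iff: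
  assumes "is_graph H" "inj_on g (fst H)" "u \<in> fst H" "v \<in> fst H"
  shows "{g u, g v} \<in> snd (map_graph g H) \<longleftrightarrow> {u, v} \<in> snd H"
proof
  assume "{g u, g v} \<in> snd (map_graph g H)"
  with assms(1) obtain x y where xy: "{x, y} \<in> snd H" "x \<in> fst H" "y \<in> fst H" "{g u, g v} = {g x, g y}"
    by (rule map_graph_edgeE)
  then have "{u, v} = {x, y}"
    using assms by (auto simp: doubleton_eq_iff dest: inj_onD)
  with xy show "{u, v} \<in> snd H" by simp
qed (rule map_graph_edge)

lemma is_graph_map_graph:
  assumes "is_graph H" "inj_on g (fst H)"
  shows "is_graph (map_graph g H)"
  unfolding is_graph_def
proof (intro conjI ballI)
  show "finite (fst (map_graph g H))"
    using assms(1) unfolding is_graph_def map_graph_def by simp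
next
  fix e assume "e \<in> snd (map_graph g H)"
  with assms(1) obtain u v where "u \<in> fst H" "v \<in> fst H" "u \<noteq> v" "e = {g u, g v}"
    by (rule map_graph_edgeE)
  with assms(2) show "\<exists>x y. x \<noteq> y \<and> e = {x, y} \<and> x \<in> fst (map_graph g H) \<and> y \<in> fst (map_graph g H)"
    unfolding map_graph_def by (auto dest: inj_onD)
qed

lemma isomorphic_map_graph:
  assumes "is_graph F" "inj_on g (fst F)"
  shows "isomorphic F (map_graph g F)"
  unfolding isomorphic_def
  using assms map_graph_edge_iff[OF assms]
  by (intro exI[of _ g]) (simp add: map_graph_def bij_betw_def)

lemma isomorphicE:
  assumes "isomorphic F H" "is_graph F" "is_graph H"
  obtains f where "bij_betw f (fst F) (fst H)" "H = map_graph f F"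
proof -
  obtain f where f: "bij_betw f (fst F) (fst H)"
    "\<forall>u\<in>fst F. \<forall>v\<in>fst F. {u, v} \<in> snd F \<longleftrightarrow> {f u, f v} \<in> snd H"
    using assms(1) unfolding isomorphic_def by blast
  have "snd H = (`) f ` snd F"
  proof
    show "snd H \<subseteq> (`) f ` snd F"
    proof
      fix e assume "e \<in> snd H"
      with assms(3) obtain x y where "x \<in> fst H" "y \<in> fst H" "e = {x, y}"
        by (rule is_graph_edgeE)
      moreover obtain a b where "a \<in> fst F" "b \<in> fst F" "x = f a" "y = f b"
        using f(1) calculation unfolding bij_betw_def by blast
      ultimately show "e \<in> (`) f ` snd F"
        using f(2) \<open>e \<in> snd H\<close> by (intro image_eqI[of _ _ "{a, b}"]) auto
    qed
    show "(`) f ` snd F \<subseteq> snd H"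
    proof
      fix e assume "e \<in> (`) f ` snd F"
      then obtain e0 where "e0 \<in> snd F" "e = f ` e0" by blast
      with assms(2) f(2) show "e \<in> snd H" by (auto elim: is_graph_edgeE)
    qed
  qed
  with f(1) have "H = map_graph f F"
    unfolding map_graph_def bij_betw_def by (simp add: prod_eq_iff)
  with f(1) show thesis by (rule that)
qed

lemma isomorphic_map_graph_trans:
  assumes "isomorphic F H" "is_graph F" "is_graph H" "inj_on g (fst H)"
  shows "isomorphic F (map_graph g H)"
proof -
  obtain f where f: "bij_betw f (fst F) (fst H)" "H = map_graph f F"
    using assms(1-3) by (rule isomorphicE)
  then have "inj_on (g \<circ> f) (fst F)"
    using assms(4) by (simp add: bij_betw_def comp_inj_on)
  then show ?thesis
    using isomorphic_map_graph[OF assms(2)] f(2) by (simp add: map_graph_comp)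
qed

lemma inj_on_map_graph:
  assumes "inj_on g U"
  shows "inj_on (map_graph g) {H. is_graph H \<and> fst H \<subseteq> U}"
proof (rule inj_on_inverseI)
  fix H assume H: "H \<in> {H. is_graph H \<and> fst H \<subseteq> U}"
  then have "map_graph (inv_into U g \<circ> g) H = map_graph id H"
    using assms by (intro map_graph_cong) auto
  then show "map_graph (inv_into U g) (map_graph g H) = H"
    by (simp add: map_graph_comp map_graph_id)
qed

lemma subgraph_map_graph:
  assumes "is_graph H" "inj_on g (fst H)" "g ` fst H \<subseteq> fst G"
    and "\<And>u v. {u, v} \<in> snd H \<Longrightarrow> u \<in> fst H \<Longrightarrow> v \<in> fst H \<Longrightarrow> u \<noteq> v \<Longrightarrow> {g u, g v} \<in> snd G"
  shows "subgraph (map_graph g H) G"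
  unfolding subgraph_def
proof (intro conjI)
  show "snd (map_graph g H) \<subseteq> snd G"
    using assms(1,4) by (auto elim: map_graph_edgeE)
qed (use assms is_graph_map_graph[OF assms(1,2)] in \<open>auto simp: map_graph_def\<close>)

lemma copies_on_verts_subset_permutations:
  assumes "is_graph F" "bij_betw g (fst F) W"
  shows "{H \<in> copies F G. fst H = W} \<subseteq> (\<lambda>p. map_graph (g \<circ> p) F) ` {p. p permutes fst F}"
proof
  fix H assume "H \<in> {H \<in> copies F G. fst H = W}"
  then have H: "isomorphic F H" "is_graph H" "fst H = W"
    unfolding copies_def subgraph_def by auto
  then obtain f where f: "bij_betw f (fst F) W" "H = map_graph f F"
    using assms(1) isomorphicE by metis
  define p where "p x = (if x \<in> fst F then inv_into (fst F) g (f x) else x)" for x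
  have "bij_betw (inv_into (fst F) g \<circ> f) (fst F) (fst F)"
    using f(1) bij_betw_inv_into[OF assms(2)] by (rule bij_betw_trans)
  then have "bij_betw p (fst F) (fst F)"
    by (rule bij_betw_cong[THEN iffD1, rotated]) (simp add: p_def)
  then have "p permutes fst F"
    by (rule bij_imp_permutes) (simp add: p_def)
  moreover have "map_graph (g \<circ> p) F = H"
    unfolding f(2)
  proof (rule map_graph_cong[OF assms(1)])
    fix x assume "x \<in> fst F"
    moreover from this have "f x \<in> g ` fst F"
      using f(1) assms(2) unfolding bij_betw_def by blast
    ultimately show "(g \<circ> p) x = f x"
      unfolding p_def by (simp add: f_inv_into_f)
  qed
  ultimately show "H \<in> (\<lambda>p. map_graph (g \<circ> p) F) ` {p. p permutes fst F}"
    by blast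
qed

lemma card_copies_on_verts_le:
  assumes "is_graph F"
  shows "card {H \<in> copies F G. fst H = W} \<le> fact (card (fst F))"
proof (cases "\<exists>g. bij_betw g (fst F) W")
  case True
  then obtain g where g: "bij_betw g (fst F) W"
    by blast
  have fin: "finite (fst F)"
    using assms unfolding is_graph_def by simp
  then have "card {H \<in> copies F G. fst H = W} \<le> card ((\<lambda>p. map_graph (g \<circ> p) F) ` {p. p permutes fst F})"
    using copies_on_verts_subset_permutations[OF assms g] by (intro card_mono) (simp_all add: finite_permutations)
  also have "\<dots> \<le> card {p. p permutes fst F}"
    using fin by (intro card_image_le) (simp add: finite_permutations)
  also have "\<dots> = fact (card (fst F))"
    using fin by (simp add: card_permutations)
  finally show ?thesis .
next
  case False
  then have "{H \<in> copies F G. fst H = W} = {}"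
    unfolding copies_def isomorphic_def by blast
  then show ?thesis
    by (metis card.empty le0)
qed

section \<open>Graphs of diameter two\<close>

lemma is_walk_singleton: "is_walk G [x] \<longleftrightarrow> x \<in> fst G"
  unfolding is_walk_def by simp

lemma is_walk_Cons_Cons:
  "is_walk G (x # y # xs) \<longleftrightarrow> x \<in> fst G \<and> {x, y} \<in> snd G \<and> is_walk G (y # xs)"
  unfolding is_walk_def by (auto simp: less_Suc_eq_0_disj)

lemma gdist_less_length:
  assumes "is_walk G xs" "hd xs = u" "last xs = v"
  shows "gdist G u v < length xs"
proof -
  have len: "length xs = Suc (length xs - 1)"
    using assms(1) unfolding is_walk_def by simp
  have "gdist G u v \<le> length xs - 1"
    unfolding gdist_def by (rule Least_le, rule exI[of _ xs]) (use assms len in simp)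
  with len show ?thesis by linarith
qed

lemma walk_of_length_gdist:
  assumes "connected_graph G" "u \<in> fst G" "v \<in> fst G"
  obtains xs where "is_walk G xs" "hd xs = u" "last xs = v" "length xs = Suc (gdist G u v)"
proof -
  obtain xs where xs: "is_walk G xs" "hd xs = u" "last xs = v"
    using assms unfolding connected_graph_def by blast
  then have "length xs = Suc (length xs - 1)"
    unfolding is_walk_def by simp
  with xs have "\<exists>k xs. is_walk G xs \<and> hd xs = u \<and> last xs = v \<and> length xs = Suc k"
    by (intro exI[of _ "length xs - 1"] exI[of _ xs]) simp
  from LeastI_ex[OF this] that show thesis
    unfolding gdist_def by blast
qed

lemma finite_gdists:
  assumes "is_graph G"
  shows "finite {gdist G u v |u v. u \<in> fst G \<and> v \<in> fst G}"
proof -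
  have "{gdist G u v |u v. u \<in> fst G \<and> v \<in> fst G} = (\<lambda>(u, v). gdist G u v) ` (fst G \<times> fst G)"
    by auto
  with assms show ?thesis
    unfolding is_graph_def by simp
qed

lemma gdist_le_diameter:
  assumes "is_graph G" "u \<in> fst G" "v \<in> fst G"
  shows "gdist G u v \<le> diameter G"
  unfolding diameter_def using finite_gdists[OF assms(1)] by (rule Max_ge) (use assms(2,3) in blast)

lemma diameter_2_common_neighbour:
  assumes "is_graph G" "connected_graph G" "diameter G = 2"
    and "u \<in> fst G" "v \<in> fst G" "u \<noteq> v" "{u, v} \<notin> snd G"
  obtains w where "w \<in> fst G" "{u, w} \<in> snd G" "{w, v} \<in> snd G"
proof -
  obtain xs where xs: "is_walk G xs" "hd xs = u" "last xs = v" "length xs = Suc (gdist G u v)"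
    using assms(2,4,5) by (rule walk_of_length_gdist)
  have "length xs \<le> 3"
    using gdist_le_diameter[OF assms(1,4,5)] assms(3) xs(4) by simp
  moreover have "xs \<noteq> []"
    using xs(1) unfolding is_walk_def by simp
  ultimately consider a where "xs = [a]" | a b where "xs = [a, b]" | a b c where "xs = [a, b, c]"
    by (auto simp: numeral_3_eq_3 le_Suc_eq length_Suc_conv)
  then show thesis
  proof cases
    case 1
    with xs(2,3) assms(6) show thesis by simp
  next
    case 2
    with xs assms(7) show thesis by (simp add: is_walk_Cons_Cons)
  next
    case 3
    with xs that show thesis by (auto simp: is_walk_Cons_Cons is_walk_singleton)
  qed
qed

lemma diameter_2_induced_path:
  assumes "is_graph G" "connected_graph G" "diameter G = 2"
  obtains u w v where "u \<in> fst G" "w \<in> fst G" "v \<in> fst G" "u \<noteq> v" "{u, v} \<notin> snd G"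
    "{u, w} \<in> snd G" "{w, v} \<in> snd G"
proof -
  have "fst G \<noteq> {}"
    using assms(2) unfolding connected_graph_def by simp
  then have "diameter G \<in> {gdist G u v |u v. u \<in> fst G \<and> v \<in> fst G}"
    unfolding diameter_def using finite_gdists[OF assms(1)] by (intro Max_in) auto
  then obtain u v where uv: "u \<in> fst G" "v \<in> fst G" "gdist G u v = 2"
    using assms(3) by auto
  have "u \<noteq> v"
    using gdist_less_length[of G "[u]" u u] uv by (auto simp: is_walk_singleton)
  moreover have "{u, v} \<notin> snd G"
    using gdist_less_length[of G "[u, v]" u v] uv by (auto simp: is_walk_Cons_Cons is_walk_singleton)
  moreover obtain w where "w \<in> fst G" "{u, w} \<in> snd G" "{w, v} \<in> snd G"
    using diameter_2_common_neighbour[OF assms uv(1,2) calculation] by blast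
  ultimately show thesis
    using that uv(1,2) by blast
qed

lemma card_verts_ge_3_if_diameter_2:
  assumes "is_graph G" "connected_graph G" "diameter G = 2"
  shows "3 \<le> card (fst G)"
proof -
  obtain u w v where uwv: "u \<in> fst G" "w \<in> fst G" "v \<in> fst G" "u \<noteq> v"
    and edges: "{u, w} \<in> snd G" "{w, v} \<in> snd G"
    using assms by (rule diameter_2_induced_path)
  have "u \<noteq> w" "w \<noteq> v"
    using is_graph_edgeD(3)[OF assms(1) edges(1)] is_graph_edgeD(3)[OF assms(1) edges(2)] .
  with uwv(4) have "card {u, w, v} = 3"
    by simp
  moreover have "card {u, w, v} \<le> card (fst G)"
    using assms(1) uwv(1-3) unfolding is_graph_def by (intro card_mono) auto
  ultimately show ?thesis
    by simp
qed

lemma degree_less_card_verts: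
  assumes "is_graph G" "v \<in> fst G"
  shows "degree G v < card (fst G)"
proof -
  have fin: "finite (fst G)"
    using assms(1) unfolding is_graph_def by simp
  have "degree G v \<le> card (fst G - {v})"
    unfolding degree_def
    by (rule card_mono) (use fin is_graph_edgeD[OF assms(1)] is_graph_edgeD(3)[OF assms(1), of v v] in auto)
  also have "\<dots> < card (fst G)"
    using fin assms(2) by (rule card_Diff1_less)
  finally show ?thesis .
qed

lemma min_degree_le_degree:
  assumes "is_graph G" "v \<in> fst G"
  shows "min_degree G \<le> degree G v"
  unfolding min_degree_def using assms unfolding is_graph_def by (intro Min_le) auto

lemma min_degree_attained:
  assumes "is_graph G" "fst G \<noteq> {}"
  obtains v where "v \<in> fst G" "degree G v = min_degree G"
proof -
  have "min_degree G \<in> degree G ` fst G"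
    unfolding min_degree_def using assms unfolding is_graph_def by (intro Min_in) auto
  with that show thesis by auto
qed

lemma min_degree_less_card_verts:
  assumes "is_graph G" "fst G \<noteq> {}"
  shows "min_degree G < card (fst G)"
proof -
  obtain v where "v \<in> fst G" "degree G v = min_degree G"
    using assms by (rule min_degree_attained)
  with degree_less_card_verts[OF assms(1)] show ?thesis
    by metis
qed

lemma isomorphic_card_verts: "isomorphic F H \<Longrightarrow> card (fst H) = card (fst F)"
  unfolding isomorphic_def by (metis bij_betw_same_card)

lemma degree_map_graph:
  assumes "is_graph F" "inj_on f (fst F)" "u \<in> fst F"
  shows "degree (map_graph f F) (f u) = degree F u"
proof -
  have "{y \<in> fst (map_graph f F). {y, f u} \<in> snd (map_graph f F)} = f ` {w \<in> fst F. {w, u} \<in> snd F}"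
    using map_graph_edge_iff[OF assms(1,2) _ assms(3)] unfolding map_graph_def by auto
  moreover have "inj_on f {w \<in> fst F. {w, u} \<in> snd F}"
    using assms(2) by (rule inj_on_subset) auto
  ultimately show ?thesis
    unfolding degree_def by (simp add: card_image)
qed

lemma min_degree_le_degree_isomorphic:
  assumes "is_graph F" "isomorphic F H" "is_graph H" "x \<in> fst H"
  shows "min_degree F \<le> degree H x"
proof -
  obtain f where f: "bij_betw f (fst F) (fst H)" "H = map_graph f F"
    using assms(2,1,3) by (rule isomorphicE)
  then have inj: "inj_on f (fst F)" and im: "fst H = f ` fst F"
    unfolding bij_betw_def by auto
  obtain u where u: "u \<in> fst F" "x = f u"
    using assms(4) im by blast
  have "min_degree F \<le> degree F u"
    using assms(1) u(1) by (rule min_degree_le_degree)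
  also have "\<dots> = degree H x"
    using degree_map_graph[OF assms(1) inj u(1)] f(2) u(2) by simp
  finally show ?thesis .
qed

lemma diameter_2_common_neighbour_isomorphic:
  assumes "is_graph F" "connected_graph F" "diameter F = 2" "isomorphic F H" "is_graph H"
    and "x \<in> fst H" "y \<in> fst H" "x \<noteq> y" "{x, y} \<notin> snd H"
  obtains w where "w \<in> fst H" "{x, w} \<in> snd H" "{w, y} \<in> snd H"
proof -
  obtain f where f: "bij_betw f (fst F) (fst H)" "H = map_graph f F"
    using assms(4,1,5) by (rule isomorphicE)
  then have im: "fst H = f ` fst F"
    unfolding bij_betw_def by auto
  obtain u v where uv: "u \<in> fst F" "v \<in> fst F" "x = f u" "y = f v"
    using assms(6,7) im by blast
  have "u \<noteq> v"
    using assms(8) uv by blast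
  moreover have "{u, v} \<notin> snd F"
    using assms(9) uv map_graph_edge[of u v F f] f(2) by blast
  ultimately obtain w where w: "w \<in> fst F" "{u, w} \<in> snd F" "{w, v} \<in> snd F"
    using diameter_2_common_neighbour[OF assms(1-3) uv(1,2)] by blast
  show thesis
  proof (rule that)
    show "f w \<in> fst H" using w(1) im by blast
    show "{x, f w} \<in> snd H" "{f w, y} \<in> snd H"
      using map_graph_edge[OF w(2), of f] map_graph_edge[OF w(3), of f] f(2) uv by simp_all
  qed
qed

section \<open>The graphs A and F\<close>

lemma A_graph_verts: "fst (A_graph l) = {1..2*l-1}"
  unfolding A_graph_def by simp

lemma A_graph_edge_iff:
  "{x, y} \<in> snd (A_graph l) \<longleftrightarrow>
     x \<noteq> y \<and> 1 \<le> x \<and> 1 \<le> y \<and> x \<le> 2*l-1 \<and> y \<le> 2*l-1 \<and> x \<le> y + (l-1) \<and> y \<le> x + (l-1)"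
    (is "_ \<longleftrightarrow> ?adj x y")
proof
  assume "{x, y} \<in> snd (A_graph l)"
  then obtain i j where "{x, y} = {i, j}" "i \<in> {1..2*l-1}" "j \<in> {1..2*l-1}" "i < j" "j - i \<le> l - 1"
    unfolding A_graph_def by auto
  then have ij: "{x, y} = {i, j}" "?adj i j"
    by auto
  then have "(x = i \<and> y = j) \<or> (x = j \<and> y = i)"
    by (simp add: doubleton_eq_iff)
  with ij(2) show "?adj x y"
    by auto
next
  have ordered: "{x, y} \<in> snd (A_graph l)" if "?adj x y" "x < y" for x y
  proof -
    have "x \<in> {1..2*l-1} \<and> y \<in> {1..2*l-1} \<and> x < y \<and> y - x \<le> l - 1"
      using that by auto
    then show ?thesis
      unfolding A_graph_def snd_conv by blast
  qed
  assume adj: "?adj x y"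
  show "{x, y} \<in> snd (A_graph l)"
  proof (cases "x < y")
    case True
    with adj show ?thesis by (rule ordered)
  next
    case False
    with adj have "?adj y x" "y < x"
      by auto
    then have "{y, x} \<in> snd (A_graph l)"
      by (rule ordered)
    then show ?thesis
      by (simp add: insert_commute)
  qed
qed

lemma finite_A_graph_edges: "finite (snd (A_graph l))"
  by (rule finite_subset[of _ "Pow {1..2*l-1}"]) (auto simp: A_graph_def)

lemma finite_copies_A_graph: "finite (copies F (A_graph l))"
  by (rule finite_copies) (simp_all add: A_graph_verts finite_A_graph_edges)

lemma A_graph_window_edge:
  assumes "x \<in> {c..c+(l-1)}" "y \<in> {c..c+(l-1)}" "x \<noteq> y" "1 \<le> c" "c + (l-1) \<le> 2*l-1"
  shows "{x, y} \<in> snd (A_graph l)"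
  using assms unfolding A_graph_edge_iff by auto

lemma subgraph_A_graph_window:
  assumes "is_graph H" "inj_on g (fst H)" "g ` fst H \<subseteq> {c..c+(l-1)}" "1 \<le> c" "c + (l-1) \<le> 2*l-1"
  shows "subgraph (map_graph g H) (A_graph l)"
proof (rule subgraph_map_graph[OF assms(1,2)])
  have "{c..c+(l-1)} \<subseteq> fst (A_graph l)"
    using assms(4,5) unfolding A_graph_verts by auto
  with assms(3) show "g ` fst H \<subseteq> fst (A_graph l)"
    by (rule subset_trans)
  fix u v assume "u \<in> fst H" "v \<in> fst H" "u \<noteq> v"
  then show "{g u, g v} \<in> snd (A_graph l)"
    using assms(2-5) by (intro A_graph_window_edge[of _ c]) (auto dest: inj_onD)
qed

lemma F_graph_verts: "fst (F_graph l t) = insert (2*l) {1..2*l-1}"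
  unfolding F_graph_def A_graph_def by simp

lemma F_graph_edge_iff:
  "{x, y} \<in> snd (F_graph l t) \<longleftrightarrow>
     {x, y} \<in> snd (A_graph l) \<or> (x = 2*l \<and> y \<in> {1..t}) \<or> (y = 2*l \<and> x \<in> {1..t})"
  unfolding F_graph_def by (auto simp: doubleton_eq_iff)

lemma F_graph_apex_edge_iff:
  assumes "t < 2*l"
  shows "{x, 2*l} \<in> snd (F_graph l t) \<longleftrightarrow> x \<in> {1..t}"
proof -
  have "{x, 2*l} \<notin> snd (A_graph l)"
    unfolding A_graph_edge_iff by linarith
  with assms show ?thesis
    unfolding F_graph_edge_iff by auto
qed

lemma finite_F_graph_edges: "finite (snd (F_graph l t))"
proof -
  have "snd (F_graph l t) = snd (A_graph l) \<union> (\<lambda>j. {j, 2*l}) ` {1..t}"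
    unfolding F_graph_def by auto
  then show ?thesis
    by (simp add: finite_A_graph_edges)
qed

lemma finite_copies_F_graph: "finite (copies F (F_graph l t))"
  by (rule finite_copies) (simp_all add: F_graph_verts finite_F_graph_edges)

section \<open>Copies through the apex 2l of F\<close>

lemma ex_bij_betw_extend:
  assumes "bij_betw f A0 B0" "A0 \<subseteq> A" "B0 \<subseteq> B" "finite A" "finite B" "card A = card B"
  obtains g where "bij_betw g A B" "\<And>x. x \<in> A0 \<Longrightarrow> g x = f x"
proof -
  have "card A0 = card B0"
    using assms(1) by (rule bij_betw_same_card)
  with assms(2-6) have "card (A - A0) = card (B - B0)"
    by (simp add: card_Diff_subset finite_subset)
  then obtain h where "bij_betw h (A - A0) (B - B0)"
    using assms(4,5) finite_same_card_bij by blast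
  from bij_betw_disjoint_Un[OF assms(1) this]
  have "bij_betw (\<lambda>x. if x \<in> A0 then f x else h x) A B"
    using assms(2,3) by (simp add: Un_absorb1)
  then show thesis
    by (rule that) simp
qed

lemma apex_copy_neighbours:
  assumes "is_graph F" "H \<in> copies F (F_graph l t)" "2*l \<in> fst H" "t \<le> min_degree F" "t < 2*l"
  shows "{x \<in> fst H. {x, 2*l} \<in> snd H} = {1..t}"
proof -
  have H: "is_graph H" "isomorphic F H" "snd H \<subseteq> snd (F_graph l t)"
    using assms(2) unfolding copies_def subgraph_def by auto
  have sub: "{x \<in> fst H. {x, 2*l} \<in> snd H} \<subseteq> {1..t}"
    using H(3) F_graph_apex_edge_iff[OF assms(5)] by blast
  have "t \<le> degree H (2*l)"
    using min_degree_le_degree_isomorphic[OF assms(1) H(2,1) assms(3)] assms(4) by simp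
  moreover have "card {x \<in> fst H. {x, 2*l} \<in> snd H} \<le> card {1..t}"
    using sub by (intro card_mono) simp_all
  ultimately have "card {x \<in> fst H. {x, 2*l} \<in> snd H} = card {1..t}"
    unfolding degree_def by simp
  with sub show ?thesis
    by (intro card_subset_eq) simp_all
qed

lemma apex_copy_verts:
  assumes "is_graph F" "connected_graph F" "diameter F = 2"
    and "H \<in> copies F (F_graph l t)" "2*l \<in> fst H" "t \<le> min_degree F" "t < l"
  shows "fst H \<subseteq> insert (2*l) {1..t+(l-1)}"
proof
  have H: "is_graph H" "isomorphic F H" "snd H \<subseteq> snd (F_graph l t)"
    using assms(4) unfolding copies_def subgraph_def by auto
  have nbrs: "{x \<in> fst H. {x, 2*l} \<in> snd H} = {1..t}"
    using apex_copy_neighbours[OF assms(1,4-6)] assms(7) by simp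
  fix x assume x: "x \<in> fst H"
  show "x \<in> insert (2*l) {1..t+(l-1)}"
  proof (cases "x = 2*l \<or> {x, 2*l} \<in> snd H")
    case True
    with x nbrs have "x = 2*l \<or> x \<in> {1..t}"
      by blast
    then show ?thesis
      by auto
  next
    case False
    then obtain w where w: "w \<in> fst H" "{x, w} \<in> snd H" "{w, 2*l} \<in> snd H"
      using diameter_2_common_neighbour_isomorphic[OF assms(1-3) H(2,1) x assms(5)] by blast
    then have "w \<in> {1..t}"
      using nbrs by blast
    moreover have "{x, w} \<in> snd (F_graph l t)"
      using w(2) H(3) by blast
    ultimately have "{x, w} \<in> snd (A_graph l)"
      using False assms(7) unfolding F_graph_edge_iff by auto
    with \<open>w \<in> {1..t}\<close> show ?thesis
      unfolding A_graph_edge_iff by auto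
  qed
qed

lemma apex_copy_verts_decomp:
  assumes "is_graph F" "connected_graph F" "diameter F = 2"
    and "H \<in> copies F (F_graph l t)" "2*l \<in> fst H" "t \<le> min_degree F" "t < l"
  obtains R where "R \<subseteq> {t+1..t+(l-1)}" "card R = card (fst F) - t - 1"
    "fst H = insert (2*l) ({1..t} \<union> R)"
proof -
  define R where "R = fst H \<inter> {t+1..t+(l-1)}"
  have "{1..t} \<subseteq> fst H"
    using apex_copy_neighbours[OF assms(1,4-6)] assms(7) by auto
  with apex_copy_verts[OF assms] assms(5) have fst_H: "fst H = insert (2*l) ({1..t} \<union> R)"
    unfolding R_def by auto
  have "finite R" "{1..t} \<inter> R = {}" "2*l \<notin> {1..t} \<union> R"
    unfolding R_def using assms(7) by auto
  then have "card (fst H) = Suc (t + card R)"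
    unfolding fst_H by (simp add: card_Un_disjoint)
  moreover have "card (fst H) = card (fst F)"
    using assms(4) isomorphic_card_verts[of F H] unfolding copies_def by simp
  ultimately have "card R = card (fst F) - t - 1"
    by simp
  moreover have "R \<subseteq> {t+1..t+(l-1)}"
    unfolding R_def by blast
  ultimately show thesis
    using fst_H by (intro that) simp_all
qed

lemma card_apex_copies_le:
  assumes "is_graph F" "connected_graph F" "diameter F = 2" "t \<le> min_degree F" "t < l"
  shows "F_degree F (F_graph l t) (2*l) \<le> fact (card (fst F)) * ((l - 1) choose (card (fst F) - t - 1))"
proof -
  define n where "n = card (fst F)"
  define Rs where "Rs = {R. R \<subseteq> {t+1..t+(l-1)} \<and> card R = n - t - 1}"
  define C where "C R = {H \<in> copies F (F_graph l t). fst H = insert (2*l) ({1..t} \<union> R)}" for R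
  have "{H \<in> copies F (F_graph l t). 2*l \<in> fst H} \<subseteq> (\<Union>R\<in>Rs. C R)"
  proof
    fix H assume H: "H \<in> {H \<in> copies F (F_graph l t). 2*l \<in> fst H}"
    then have "H \<in> copies F (F_graph l t)" "2*l \<in> fst H"
      by simp_all
    then obtain R where "R \<subseteq> {t+1..t+(l-1)}" "card R = n - t - 1" "fst H = insert (2*l) ({1..t} \<union> R)"
      unfolding n_def by (rule apex_copy_verts_decomp[OF assms(1-3) _ _ assms(4,5)])
    with H show "H \<in> (\<Union>R\<in>Rs. C R)"
      unfolding Rs_def C_def by blast
  qed
  then have "F_degree F (F_graph l t) (2*l) \<le> card (\<Union>R\<in>Rs. C R)"
    unfolding F_degree_eq_card_copies
    by (rule card_mono[OF finite_subset[OF _ finite_copies_F_graph[of F l t]], rotated]) (auto simp: C_def)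
  also have "\<dots> \<le> (\<Sum>R\<in>Rs. card (C R))"
    unfolding Rs_def by (intro card_UN_le) simp
  also have "\<dots> \<le> (\<Sum>R\<in>Rs. fact n)"
    using card_copies_on_verts_le[OF assms(1)] unfolding C_def n_def by (intro sum_mono)
  also have "\<dots> = fact n * ((l - 1) choose (n - t - 1))"
    unfolding Rs_def using n_subsets[of "{t+1..t+(l-1)}" "n - t - 1"] by simp
  finally show ?thesis
    unfolding n_def .
qed

lemma ex_bij_apex:
  assumes "is_graph F" "w \<in> fst F" "card (fst F) \<le> l"
  obtains g where "bij_betw g (fst F) (insert (2*l) {1..card (fst F) - 1})" "g w = 2*l"
    "\<And>x. x \<in> fst F \<Longrightarrow> {x, w} \<in> snd F \<Longrightarrow> g x \<in> {1..degree F w}"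
proof -
  define n where "n = card (fst F)"
  define N where "N = {x \<in> fst F. {x, w} \<in> snd F}"
  have fin: "finite (fst F)"
    using assms(1) unfolding is_graph_def by simp
  have "w \<notin> N"
    using is_graph_edgeD(3)[OF assms(1), of w w] unfolding N_def by auto
  have "degree F w < n"
    using degree_less_card_verts[OF assms(1,2)] unfolding n_def .
  obtain h where h: "bij_betw h N {1..degree F w}"
    using fin finite_same_card_bij[of N "{1..degree F w}"] unfolding N_def degree_def by auto
  moreover have "bij_betw (\<lambda>_. 2*l) {w} {2*l}"
    by (simp add: bij_betw_def)
  moreover have "N \<inter> {w} = {}" "{1..degree F w} \<inter> {2*l} = {}"
    using \<open>w \<notin> N\<close> \<open>degree F w < n\<close> assms(3) unfolding n_def by auto
  ultimately have bij0:
    "bij_betw (\<lambda>x. if x \<in> N then h x else 2*l) (insert w N) (insert (2*l) {1..degree F w})"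
    using bij_betw_disjoint_Un by fastforce
  have "insert w N \<subseteq> fst F" "insert (2*l) {1..degree F w} \<subseteq> insert (2*l) {1..n-1}"
    using assms(2) \<open>degree F w < n\<close> unfolding N_def by auto
  moreover have "card (fst F) = card (insert (2*l) {1..n-1})"
    using assms(2,3) \<open>degree F w < n\<close> unfolding n_def by auto
  ultimately obtain g where g: "bij_betw g (fst F) (insert (2*l) {1..n-1})"
    and g_on: "\<And>x. x \<in> insert w N \<Longrightarrow> g x = (if x \<in> N then h x else 2*l)"
    using ex_bij_betw_extend[OF bij0 _ _ fin] by blast
  show thesis
  proof (rule that)
    show "g w = 2*l"
      using g_on[of w] \<open>w \<notin> N\<close> by simp
    show "g x \<in> {1..degree F w}" if "x \<in> fst F" "{x, w} \<in> snd F" for x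
      using g_on[of x] that h unfolding N_def bij_betw_def by auto
  qed (use g n_def in simp)
qed

lemma subgraph_F_graph_map_graph_apex:
  assumes "is_graph F" "w \<in> fst F" "card (fst F) \<le> l"
    and "bij_betw g (fst F) (insert (2*l) {1..card (fst F) - 1})" "g w = 2*l"
    and "\<And>x. x \<in> fst F \<Longrightarrow> {x, w} \<in> snd F \<Longrightarrow> g x \<in> {1..t}"
  shows "subgraph (map_graph g F) (F_graph l t)"
proof -
  have inj: "inj_on g (fst F)"
    using assms(4) unfolding bij_betw_def by simp
  have "0 < card (fst F)"
    using assms(1,2) card_gt_0_iff unfolding is_graph_def by blast
  have g_rest: "g x \<in> {1..1+(l-1)}" if "x \<in> fst F" "x \<noteq> w" for x
  proof -
    have "g x \<in> insert (2*l) {1..card (fst F) - 1}"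
      using assms(4) that(1) unfolding bij_betw_def by blast
    moreover have "g x \<noteq> 2*l"
      using inj_onD[OF inj, of x w] that assms(2,5) by auto
    ultimately show ?thesis
      using assms(3) by auto
  qed
  have apex_edge: "{g x, g w} \<in> snd (F_graph l t)" if "{x, w} \<in> snd F" "x \<in> fst F" for x
    using assms(5) assms(6)[of x] that unfolding F_graph_edge_iff by auto
  show ?thesis
  proof (rule subgraph_map_graph[OF assms(1) inj])
    show "g ` fst F \<subseteq> fst (F_graph l t)"
      using assms(3,4) unfolding bij_betw_def F_graph_verts by auto
    fix u v assume uv: "{u, v} \<in> snd F" "u \<in> fst F" "v \<in> fst F" "u \<noteq> v"
    consider "u = w" | "v = w" | "u \<noteq> w" "v \<noteq> w"
      by blast
    then show "{g u, g v} \<in> snd (F_graph l t)"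
    proof cases
      case 1
      with uv apex_edge[of v] show ?thesis by (simp add: insert_commute)
    next
      case 2
      with uv apex_edge[of u] show ?thesis by simp
    next
      case 3
      moreover have "g u \<noteq> g v"
        using inj_onD[OF inj] uv(2-4) by blast
      ultimately have "{g u, g v} \<in> snd (A_graph l)"
        using g_rest uv(2,3) \<open>0 < card (fst F)\<close> assms(3)
        by (intro A_graph_window_edge[of _ 1]) auto
      then show ?thesis
        unfolding F_graph_edge_iff by simp
    qed
  qed
qed

lemma apex_copies_nonempty:
  assumes "is_graph F" "connected_graph F" "card (fst F) \<le> l"
  shows "0 < F_degree F (F_graph l (min_degree F)) (2*l)"
proof -
  obtain w where w: "w \<in> fst F" "degree F w = min_degree F"
    using assms(1,2) min_degree_attained unfolding connected_graph_def by metis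
  obtain g where g: "bij_betw g (fst F) (insert (2*l) {1..card (fst F) - 1})" "g w = 2*l"
    "\<And>x. x \<in> fst F \<Longrightarrow> {x, w} \<in> snd F \<Longrightarrow> g x \<in> {1..min_degree F}"
    using ex_bij_apex[OF assms(1) w(1) assms(3)] unfolding w(2) by blast
  then have "subgraph (map_graph g F) (F_graph l (min_degree F))"
    by (intro subgraph_F_graph_map_graph_apex[OF assms(1) w(1) assms(3)])
  moreover have "isomorphic F (map_graph g F)"
    using g(1) unfolding bij_betw_def by (intro isomorphic_map_graph[OF assms(1)]) simp
  moreover have "2*l \<in> fst (map_graph g F)"
    using imageI[OF w(1), of g] g(2) unfolding map_graph_def by simp
  ultimately have "map_graph g F \<in> {H \<in> copies F (F_graph l (min_degree F)). 2*l \<in> fst H}"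
    unfolding copies_def by simp
  moreover have "finite {H \<in> copies F (F_graph l (min_degree F)). 2*l \<in> fst H}"
    using finite_copies_F_graph[of F l "min_degree F"] by simp
  ultimately show ?thesis
    unfolding F_degree_eq_card_copies by (subst card_gt_0_iff) blast
qed

section \<open>Copies using a long edge\<close>

definition long_edge_copies :: "'b graph \<Rightarrow> nat \<Rightarrow> nat \<Rightarrow> nat graph set" where
  "long_edge_copies F l i =
     {H \<in> copies F (A_graph l). i+1 \<in> fst H \<and> i \<notin> fst H \<and> {i+1, i+l} \<in> snd H}"

lemma finite_long_edge_copies: "finite (long_edge_copies F l i)"
  unfolding long_edge_copies_def using finite_copies_A_graph[of F l] by simp

lemma map_graph_in_long_edge_copies:
  assumes "is_graph F" "{a, b} \<in> snd F" "inj_on g (fst F)" "g ` fst F \<subseteq> {i+1..i+l}"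
    and "g a = i+1" "g b = i+l" "1 \<le> i" "i + l \<le> 2*l-1"
  shows "map_graph g F \<in> long_edge_copies F l i"
proof -
  have "subgraph (map_graph g F) (A_graph l)"
    using assms(4,7,8) by (intro subgraph_A_graph_window[OF assms(1,3), of "i+1"]) auto
  moreover have "isomorphic F (map_graph g F)"
    using assms(1,3) by (rule isomorphic_map_graph)
  moreover have "i+1 \<in> fst (map_graph g F)" "i \<notin> fst (map_graph g F)"
    using assms(4,5) is_graph_edgeD(1)[OF assms(1,2)] unfolding map_graph_def by force+
  moreover have "{i+1, i+l} \<in> snd (map_graph g F)"
    using map_graph_edge[OF assms(2), of g] assms(5,6) by simp
  ultimately show ?thesis
    unfolding long_edge_copies_def copies_def by simp
qed

lemma ex_long_edge_copy_on_verts: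
  assumes "is_graph F" "{a, b} \<in> snd F" "T \<subseteq> {i+2..i+l-1}" "card T = card (fst F) - 2"
    and "1 \<le> i" "i + l \<le> 2*l-1"
  obtains H where "H \<in> long_edge_copies F l i" "fst H - {i+1, i+l} = T"
proof -
  define W where "W = insert (i+1) (insert (i+l) T)"
  have fin: "finite (fst F)"
    using assms(1) unfolding is_graph_def by simp
  have ab: "a \<in> fst F" "b \<in> fst F" "a \<noteq> b"
    using is_graph_edgeD[OF assms(1,2)] by auto
  then have "card {a, b} \<le> card (fst F)"
    using fin by (intro card_mono) auto
  with ab have "2 \<le> card (fst F)"
    by simp
  have "i+1 \<notin> {i+2..i+l-1}" "i+l \<notin> {i+2..i+l-1}" "i+1 \<noteq> i+l"
    using assms(5,6) by auto
  then have "i+1 \<notin> T" "i+l \<notin> T" "i+1 \<noteq> i+l"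
    using assms(3) by blast+
  moreover have fin_T: "finite T"
    using assms(3) by (rule finite_subset) simp
  ultimately have card_W: "card (fst F) = card W"
    using assms(4) \<open>2 \<le> card (fst F)\<close> unfolding W_def by (simp add: card_insert_if)
  have bij_ab: "bij_betw (\<lambda>x. if x = a then i+1 else i+l) {a, b} {i+1, i+l}"
    using ab \<open>i+1 \<noteq> i+l\<close> by (auto simp: bij_betw_def)
  have sub: "{a, b} \<subseteq> fst F" "{i+1, i+l} \<subseteq> W" and fin_W: "finite W"
    using ab fin_T unfolding W_def by auto
  obtain g where g: "bij_betw g (fst F) W"
    and g_ab: "\<And>x. x \<in> {a, b} \<Longrightarrow> g x = (if x = a then i+1 else i+l)"
    using ex_bij_betw_extend[OF bij_ab sub fin fin_W card_W] by blast
  have "{i+2..i+l-1} \<subseteq> {i+1..i+l}" "i+1 \<in> {i+1..i+l}" "i+l \<in> {i+1..i+l}"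
    using assms(5,6) by auto
  with subset_trans[OF assms(3)] g have "g ` fst F \<subseteq> {i+1..i+l}"
    unfolding bij_betw_def W_def by simp
  then have "map_graph g F \<in> long_edge_copies F l i"
    using g g_ab[of a] g_ab[of b] ab assms(5,6)
    by (intro map_graph_in_long_edge_copies[OF assms(1,2)]) (auto simp: bij_betw_def)
  moreover have "fst (map_graph g F) - {i+1, i+l} = T"
    using g \<open>i+1 \<notin> T\<close> \<open>i+l \<notin> T\<close> unfolding bij_betw_def map_graph_def W_def by auto
  ultimately show thesis
    by (rule that)
qed

lemma binomial_le_card_long_edge_copies:
  assumes "is_graph F" "{a, b} \<in> snd F" "1 \<le> i" "i + l \<le> 2*l-1"
  shows "(l-2) choose (card (fst F) - 2) \<le> card (long_edge_copies F l i)"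
proof -
  define Ts where "Ts = {T. T \<subseteq> {i+2..i+l-1} \<and> card T = card (fst F) - 2}"
  have "Ts \<subseteq> (\<lambda>H. fst H - {i+1, i+l}) ` long_edge_copies F l i"
  proof
    fix T assume "T \<in> Ts"
    then obtain H where "H \<in> long_edge_copies F l i" "fst H - {i+1, i+l} = T"
      using ex_long_edge_copy_on_verts[OF assms(1,2) _ _ assms(3,4)] unfolding Ts_def by blast
    then show "T \<in> (\<lambda>H. fst H - {i+1, i+l}) ` long_edge_copies F l i"
      by blast
  qed
  then have "card Ts \<le> card ((\<lambda>H. fst H - {i+1, i+l}) ` long_edge_copies F l i)"
    by (intro card_mono finite_imageI finite_long_edge_copies)
  also have "\<dots> \<le> card (long_edge_copies F l i)"
    using finite_long_edge_copies by (rule card_image_le)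
  finally show ?thesis
    using n_subsets[of "{i+2..i+l-1}" "card (fst F) - 2"] unfolding Ts_def by simp
qed

lemma A_graph_edge_shift:
  assumes "{i, v} \<in> snd (A_graph l)" "v \<noteq> i+1" "i+1 \<le> l"
  shows "{i+1, v} \<in> snd (A_graph l)"
  using assms unfolding A_graph_edge_iff by auto

lemma subgraph_A_graph_transpose:
  assumes "subgraph H (A_graph l)" "i+1 \<notin> fst H" "1 \<le> i" "i+1 \<le> l"
  shows "subgraph (map_graph (transpose i (i+1)) H) (A_graph l)"
proof -
  let ?\<tau> = "transpose i (i+1)"
  have H: "is_graph H" "fst H \<subseteq> {1..2*l-1}" "snd H \<subseteq> snd (A_graph l)"
    using assms(1) unfolding subgraph_def A_graph_verts by auto
  have fixed: "?\<tau> x = x" if "x \<in> fst H" "x \<noteq> i" for x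
    using that assms(2) by (auto simp: transpose_def)
  show ?thesis
  proof (rule subgraph_map_graph[OF H(1) inj_on_transpose])
    show "?\<tau> ` fst H \<subseteq> fst (A_graph l)"
      using H(2) fixed assms(3,4) unfolding A_graph_verts by (force simp: transpose_def)
    have shift: "{?\<tau> i, ?\<tau> v} \<in> snd (A_graph l)" if "{i, v} \<in> snd H" "v \<in> fst H" "v \<noteq> i" for v
      using A_graph_edge_shift[of i v l] that H(3) fixed[of v] assms(2,4) by auto
    fix u v assume uv: "{u, v} \<in> snd H" "u \<in> fst H" "v \<in> fst H" "u \<noteq> v"
    consider "u = i" | "v = i" | "u \<noteq> i" "v \<noteq> i"
      by blast
    then show "{?\<tau> u, ?\<tau> v} \<in> snd (A_graph l)"
    proof cases
      case 1
      with uv shift[of v] show ?thesis by simp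
    next
      case 2
      with uv shift[of u] show ?thesis by (simp add: insert_commute)
    next
      case 3
      with uv H(3) fixed show ?thesis by auto
    qed
  qed
qed

lemma transpose_copy:
  assumes "is_graph F" "H \<in> copies F (A_graph l)" "i \<in> fst H" "i+1 \<notin> fst H" "1 \<le> i" "i+1 \<le> l"
  defines "H' \<equiv> map_graph (transpose i (i+1)) H"
  shows "H' \<in> copies F (A_graph l)" "i+1 \<in> fst H'" "i \<notin> fst H'" "{i+1, i+l} \<notin> snd H'"
proof -
  let ?\<tau> = "transpose i (i+1)"
  have H: "subgraph H (A_graph l)" "is_graph H" "isomorphic F H" "snd H \<subseteq> snd (A_graph l)"
    using assms(2) unfolding copies_def subgraph_def by auto
  have "subgraph H' (A_graph l)"
    unfolding H'_def using H(1) assms(4-6) by (rule subgraph_A_graph_transpose)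
  moreover have "isomorphic F H'"
    unfolding H'_def using H(3) assms(1) H(2) by (rule isomorphic_map_graph_trans) simp
  ultimately show "H' \<in> copies F (A_graph l)"
    unfolding copies_def by simp
  show "i+1 \<in> fst H'"
    using assms(3) unfolding H'_def map_graph_def by force
  show "i \<notin> fst H'"
    using assms(4) unfolding H'_def map_graph_def by (auto simp: transpose_def split: if_splits)
  show "{i+1, i+l} \<notin> snd H'"
  proof
    assume "{i+1, i+l} \<in> snd H'"
    with H(2) obtain u v where uv: "{u, v} \<in> snd H" "{i+1, i+l} = {?\<tau> u, ?\<tau> v}"
      unfolding H'_def by (rule map_graph_edgeE) blast
    \<comment> \<open>the transposition is an involution and fixes i+l\<close>
    from arg_cong[OF uv(2), of "image ?\<tau>"] assms(5,6) have "{u, v} = {i, i+l}"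
      by simp
    with uv(1) H(4) have "{i, i+l} \<in> snd (A_graph l)"
      by auto
    then show False
      unfolding A_graph_edge_iff by linarith
  qed
qed

lemma card_long_edge_copies_le_F_degree_diff:
  assumes "is_graph F" "1 \<le> i" "i+1 \<le> l"
  shows "int (card (long_edge_copies F l i))
    \<le> int (F_degree F (A_graph l) (i+1)) - int (F_degree F (A_graph l) i)"
proof -
  define C where "C v = {H \<in> copies F (A_graph l). v \<in> fst H}" for v
  define E where "E = long_edge_copies F l i"
  let ?\<tau> = "map_graph (transpose i (i+1))"
  have fin: "finite (C v)" for v
    unfolding C_def using finite_copies_A_graph[of F l] by simp
  have "?\<tau> H \<in> C (i+1) - C i - E" if "H \<in> C i - C (i+1)" for H
    using transpose_copy[OF assms(1) _ _ _ assms(2,3), of H] that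
    unfolding C_def E_def long_edge_copies_def by blast
  then have "?\<tau> ` (C i - C (i+1)) \<subseteq> C (i+1) - C i - E"
    by blast
  moreover have "E \<subseteq> C (i+1) - C i"
    unfolding C_def E_def long_edge_copies_def by auto
  ultimately have "?\<tau> ` (C i - C (i+1)) \<union> E \<subseteq> C (i+1) - C i"
    "?\<tau> ` (C i - C (i+1)) \<inter> E = {}"
    by blast+
  moreover have "inj_on ?\<tau> (C i - C (i+1))"
    using inj_on_map_graph[OF inj_on_transpose[of i "i+1" UNIV]]
    by (rule inj_on_subset) (auto simp: C_def copies_def subgraph_def)
  ultimately have "card (C i - C (i+1)) + card E = card (?\<tau> ` (C i - C (i+1)) \<union> E)"
    using fin finite_long_edge_copies[of F l i] unfolding E_def
    by (simp add: card_Un_disjoint card_image)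
  also have "\<dots> \<le> card (C (i+1) - C i)"
    using fin \<open>?\<tau> ` (C i - C (i+1)) \<union> E \<subseteq> C (i+1) - C i\<close> by (intro card_mono) simp_all
  finally have "card (C i - C (i+1)) + card E \<le> card (C (i+1) - C i)" .
  moreover have "card (C (i+1)) = card (C i \<inter> C (i+1)) + card (C (i+1) - C i)"
    "card (C i) = card (C i \<inter> C (i+1)) + card (C i - C (i+1))"
    using card_Int_Diff[OF fin, of "i+1" "C i"] card_Int_Diff[OF fin, of i "C (i+1)"]
    by (simp_all add: Int_commute)
  ultimately show ?thesis
    unfolding F_degree_eq_card_copies C_def[symmetric] E_def[symmetric] by linarith
qed

section \<open>Minimum degree one\<close>

text \<open>
  The apex goes to 2 and its only neighbour 1 to l+1; the vertices 2, ..., l go to the clique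
  {3, ..., l+2}, with l sent to l+2 because l+1 is taken.
\<close>

definition fold_apex :: "nat \<Rightarrow> nat \<Rightarrow> nat" where
  "fold_apex l x = (if x = 2*l then 2 else if x = 1 then l+1 else if x = l then l+2 else x+1)"

lemma inj_on_fold_apex:
  assumes "3 \<le> l"
  shows "inj_on (fold_apex l) (insert (2*l) {1..l})"
  using assms unfolding fold_apex_def by (intro inj_onI) (auto split: if_splits)

lemma fold_apex_range:
  assumes "3 \<le> l" "x \<in> {1..l}"
  shows "fold_apex l x \<in> {3..3+(l-1)}"
  using assms unfolding fold_apex_def by auto

lemma subgraph_A_graph_fold_apex:
  assumes "subgraph H (F_graph l 1)" "fst H \<subseteq> insert (2*l) {1..l}" "3 \<le> l"
  shows "subgraph (map_graph (fold_apex l) H) (A_graph l)"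
proof -
  have H: "is_graph H" "snd H \<subseteq> snd (F_graph l 1)"
    using assms(1) unfolding subgraph_def by auto
  have inj: "inj_on (fold_apex l) (fst H)"
    using inj_on_fold_apex[OF assms(3)] assms(2) by (rule inj_on_subset)
  have apex_nbr: "x = 1" if "{x, 2*l} \<in> snd H" for x
    using that H(2) F_graph_apex_edge_iff[of 1 l x] assms(3) by auto
  show ?thesis
  proof (rule subgraph_map_graph[OF H(1) inj])
    show "fold_apex l ` fst H \<subseteq> fst (A_graph l)"
      using assms(2) fold_apex_range[OF assms(3)] assms(3) unfolding A_graph_verts
      by (force simp: fold_apex_def)
    have long: "{fold_apex l 1, fold_apex l (2*l)} \<in> snd (A_graph l)"
      using assms(3) unfolding fold_apex_def A_graph_edge_iff by auto
    fix u v assume uv: "{u, v} \<in> snd H" "u \<in> fst H" "v \<in> fst H" "u \<noteq> v"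
    consider "u = 2*l" | "v = 2*l" | "u \<in> {1..l}" "v \<in> {1..l}"
      using uv(2,3) assms(2) by blast
    then show "{fold_apex l u, fold_apex l v} \<in> snd (A_graph l)"
    proof cases
      case 1
      with uv apex_nbr[of v] long show ?thesis by (simp add: insert_commute)
    next
      case 2
      with uv apex_nbr[of u] long show ?thesis by (simp add: insert_commute)
    next
      case 3
      with uv(2-4) inj_onD[OF inj] assms(3) show ?thesis
        by (intro A_graph_window_edge[of _ 3] fold_apex_range) auto
    qed
  qed
qed

lemma fold_apex_copy:
  assumes "is_graph F" "connected_graph F" "diameter F = 2" "min_degree F = 1" "3 \<le> l"
    and "H \<in> copies F (F_graph l 1)" "2*l \<in> fst H"
  defines "H' \<equiv> map_graph (fold_apex l) H"
  shows "H' \<in> long_edge_copies F l 1" "{2, 3} \<notin> snd H'"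
proof -
  let ?U = "insert (2*l) {1..l}"
  have H: "subgraph H (F_graph l 1)" "is_graph H" "isomorphic F H"
    using assms(6) unfolding copies_def subgraph_def by auto
  have VH: "fst H \<subseteq> ?U"
    using apex_copy_verts[OF assms(1-3,6,7)] assms(4,5) by simp
  have nbrs: "{x \<in> fst H. {x, 2*l} \<in> snd H} = {1}"
    using apex_copy_neighbours[OF assms(1,6,7)] assms(4,5) by simp
  have "subgraph H' (A_graph l)"
    unfolding H'_def using H(1) VH assms(5) by (rule subgraph_A_graph_fold_apex)
  moreover have "isomorphic F H'"
    unfolding H'_def using H(3) assms(1) H(2) inj_on_subset[OF inj_on_fold_apex[OF assms(5)] VH]
    by (rule isomorphic_map_graph_trans)
  moreover have "2 \<in> fst H'" "1 \<notin> fst H'"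
    using assms(7) VH unfolding H'_def map_graph_def fold_apex_def by (force split: if_splits)+
  moreover have "{2, l+1} \<in> snd H'"
    using map_graph_edge[of 1 "2*l" H "fold_apex l"] nbrs assms(5)
    unfolding H'_def fold_apex_def by (auto simp: insert_commute)
  ultimately show "H' \<in> long_edge_copies F l 1"
    unfolding long_edge_copies_def copies_def by (simp add: numeral_2_eq_2)
  show "{2, 3} \<notin> snd H'"
  proof
    assume "{2, 3} \<in> snd H'"
    with H(2) obtain u v where uv: "{u, v} \<in> snd H" "u \<in> fst H" "v \<in> fst H"
      "{2, 3} = {fold_apex l u, fold_apex l v}"
      unfolding H'_def by (rule map_graph_edgeE) blast
    moreover have "fold_apex l (2*l) = 2" "fold_apex l 2 = 3"
      using assms(5) unfolding fold_apex_def by simp_all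
    ultimately have img: "fold_apex l ` {u, v} = fold_apex l ` {2*l, 2}"
      by simp
    have "{u, v} \<subseteq> ?U" "{2*l, 2} \<subseteq> ?U"
      using uv(2,3) VH assms(5) by auto
    from inj_on_image_eq_iff[OF inj_on_fold_apex[OF assms(5)] this] img
    have "{u, v} = {2*l, 2}"
      by simp
    with uv have "2 \<in> {x \<in> fst H. {x, 2*l} \<in> snd H}"
      by (auto simp: insert_commute)
    with nbrs show False
      by simp
  qed
qed

lemma ex_long_edge_copy_with_edge_2_3:
  assumes "is_graph F" "connected_graph F" "diameter F = 2" "card (fst F) < l"
  obtains H where "H \<in> long_edge_copies F l 1" "{2, 3} \<in> snd H"
proof -
  define n where "n = card (fst F)"
  have fin: "finite (fst F)"
    using assms(1) unfolding is_graph_def by simp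
  have "3 \<le> n" "n < l"
    using card_verts_ge_3_if_diameter_2[OF assms(1-3)] assms(4) unfolding n_def by simp_all
  obtain u w v where uwv: "u \<in> fst F" "w \<in> fst F" "v \<in> fst F" "u \<noteq> v"
    and edges: "{u, w} \<in> snd F" "{w, v} \<in> snd F"
    using assms(1-3) by (rule diameter_2_induced_path)
  have "u \<noteq> w" "w \<noteq> v"
    using is_graph_edgeD(3)[OF assms(1) edges(1)] is_graph_edgeD(3)[OF assms(1) edges(2)] .
  define W where "W = insert (l+1) {2..n}"
  have bij0: "bij_betw (\<lambda>x. if x = w then 2 else if x = u then l+1 else 3) {w, u, v} {2, l+1, 3}"
    using uwv(4) \<open>u \<noteq> w\<close> \<open>w \<noteq> v\<close> \<open>n < l\<close> \<open>3 \<le> n\<close> by (auto simp: bij_betw_def)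
  have sub: "{w, u, v} \<subseteq> fst F" "{2, l+1, 3} \<subseteq> W"
    using uwv \<open>3 \<le> n\<close> unfolding W_def by auto
  have card_W: "card (fst F) = card W"
    using \<open>3 \<le> n\<close> \<open>n < l\<close> unfolding W_def n_def by simp
  obtain g where g: "bij_betw g (fst F) W"
    and g_on: "\<And>x. x \<in> {w, u, v} \<Longrightarrow> g x = (if x = w then 2 else if x = u then l+1 else 3)"
    using ex_bij_betw_extend[OF bij0 sub fin _ card_W] unfolding W_def by blast
  have g_wuv: "g w = 1+1" "g u = 1+l" "g v = 3"
    using g_on[of w] g_on[of u] g_on[of v] uwv(4) \<open>u \<noteq> w\<close> \<open>w \<noteq> v\<close> by auto
  have "g ` fst F \<subseteq> {1+1..1+l}"
    using g \<open>n < l\<close> unfolding bij_betw_def W_def by auto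
  then have "map_graph g F \<in> long_edge_copies F l 1"
    using edges(1) g g_wuv \<open>3 \<le> n\<close> \<open>n < l\<close>
    by (intro map_graph_in_long_edge_copies[OF assms(1), of w u]) (auto simp: insert_commute bij_betw_def)
  moreover have "{2, 3} \<in> snd (map_graph g F)"
    using map_graph_edge[OF edges(2), of g] g_wuv by (simp add: numeral_2_eq_2)
  ultimately show thesis
    by (rule that)
qed

lemma apex_copies_less_long_edge_copies:
  assumes "is_graph F" "connected_graph F" "diameter F = 2" "min_degree F = 1" "card (fst F) < l"
  shows "F_degree F (F_graph l 1) (2*l) < card (long_edge_copies F l 1)"
proof -
  define S where "S = {H \<in> copies F (F_graph l 1). 2*l \<in> fst H}"
  define E where "E = long_edge_copies F l 1"
  have "3 \<le> l"
    using card_verts_ge_3_if_diameter_2[OF assms(1-3)] assms(5) by simp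
  obtain H0 where H0: "H0 \<in> E" "{2, 3} \<in> snd H0"
    using ex_long_edge_copy_with_edge_2_3[OF assms(1-3,5)] unfolding E_def by blast
  then have folded: "map_graph (fold_apex l) ` S \<subseteq> E - {H0}"
    using fold_apex_copy[OF assms(1-4) \<open>3 \<le> l\<close>] unfolding S_def E_def by fastforce
  have "S \<subseteq> {H. is_graph H \<and> fst H \<subseteq> insert (2*l) {1..l}}"
    using apex_copy_verts[OF assms(1-3)] assms(4) \<open>3 \<le> l\<close>
    unfolding S_def copies_def subgraph_def by fastforce
  with inj_on_map_graph[OF inj_on_fold_apex[OF \<open>3 \<le> l\<close>]] have "inj_on (map_graph (fold_apex l)) S"
    by (rule inj_on_subset)
  then have "card S = card (map_graph (fold_apex l) ` S)"
    by (rule card_image[symmetric])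
  also have "\<dots> \<le> card (E - {H0})"
    using folded finite_long_edge_copies unfolding E_def by (intro card_mono) simp_all
  also have "\<dots> < card E"
    unfolding E_def using finite_long_edge_copies H0(1)[unfolded E_def] by (rule card_Diff1_less)
  finally show ?thesis
    unfolding F_degree_eq_card_copies S_def E_def .
qed

lemma apex_copies_less_long_edge_copies_if_binomial_less:
  assumes "is_graph F" "connected_graph F" "diameter F = 2" "t \<le> min_degree F" "t < l"
    and "1 \<le> i" "i + l \<le> 2*l-1"
    and "fact (card (fst F)) * ((l - 1) choose (card (fst F) - t - 1)) < (l - 2) choose (card (fst F) - 2)"
  shows "F_degree F (F_graph l t) (2*l) < card (long_edge_copies F l i)"
proof -
  obtain u w v where "{u, w} \<in> snd F"
    using assms(1-3) by (rule diameter_2_induced_path)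
  have "F_degree F (F_graph l t) (2*l) \<le> fact (card (fst F)) * ((l - 1) choose (card (fst F) - t - 1))"
    using assms(1-5) by (rule card_apex_copies_le)
  also have "\<dots> < (l - 2) choose (card (fst F) - 2)"
    by (rule assms(8))
  also have "\<dots> \<le> card (long_edge_copies F l i)"
    using assms(1) \<open>{u, w} \<in> snd F\<close> assms(6,7) by (rule binomial_le_card_long_edge_copies)
  finally show ?thesis .
qed

theorem lemma9:
  fixes F :: "'b graph" and l :: nat
  assumes "is_graph F"
    and "connected_graph F" and "diameter F = 2"
    and "l > card (fst F)"
    and "min_degree F = 1 \<or>
         (min_degree F \<ge> 2 \<and>
          (l - 2) choose (card (fst F) - 2)
            > fact (card (fst F)) * ((l - 1) choose (card (fst F) - min_degree F - 1)))"
  shows "0 < F_degree F (F_graph l (min_degree F)) (2*l) \<and>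
    (\<forall>i\<in>{1..min_degree F}.
       int (F_degree F (F_graph l (min_degree F)) (2*l))
         < int (F_degree F (A_graph l) (i+1)) - int (F_degree F (A_graph l) i))"
proof -
  define t where "t = min_degree F"
  have "fst F \<noteq> {}"
    using assms(2) unfolding connected_graph_def by simp
  with min_degree_less_card_verts[OF assms(1)] assms(4) have "t < l"
    unfolding t_def by simp
  have less: "F_degree F (F_graph l t) (2*l) < card (long_edge_copies F l i)" if "i \<in> {1..t}" for i
  proof (cases "t = 1")
    case True
    with that assms(4) show ?thesis
      using apex_copies_less_long_edge_copies[OF assms(1-3)] unfolding t_def by simp
  next
    case False
    with assms(5) that \<open>t < l\<close> show ?thesis
      unfolding t_def by (intro apex_copies_less_long_edge_copies_if_binomial_less[OF assms(1-3)]) auto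
  qed
  moreover have "int (card (long_edge_copies F l i))
      \<le> int (F_degree F (A_graph l) (i+1)) - int (F_degree F (A_graph l) i)" if "i \<in> {1..t}" for i
    using card_long_edge_copies_le_F_degree_diff[OF assms(1)] that \<open>t < l\<close> by simp
  ultimately show ?thesis
    using apex_copies_nonempty[OF assms(1,2)] assms(4) unfolding t_def by fastforce
qed

end
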